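(* Let $p$ be a positive integer and consider the $\delta_{p,2}$-filtration of $A_1(\mathbf{C})$ (weights $\Lambda(i,j)=pi+2j$). Let $L$ be a nonzero operator in $A_1(\mathbf{C})$ whose symbol is $\sigma(L)=(\xi^p+\chi^2)^2$. If $M\neq0$ lies in the centralizer of $L$ in $A_1(\mathbf{C})$, then $\mathrm{ord}(M)\equiv 0$ or $\mathrm{ord}(M)\equiv p \pmod{2p}$.
   Context: $A_1(\mathbf{C})$ is the first Weyl algebra of operators $P=\sum a_{ij}x^i\partial^j$, $[\partial,x]=1$; $\mathrm{ord}(P)$ is the degree in $\partial$. With $\Lambda(i,j)=pi+2j$, $\delta(P)=\max\{\Lambda(i,j):a_{ij}\neq0\}$ and the symbol is $\sigma(P)=\sum_{\Lambda(i,j)=\delta(P)}a_{ij}\chi^i\xi^j\in\mathbf{C}[\chi,\xi]$. *)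

theory Defs
  imports Complex_Main
begin

text \<open>Elements of the first Weyl algebra A_1(C) in normal form
  P = sum a_ij x^i d^j, represented by their coefficient functions
  (i,j) |-> a_ij, required to have finite support.\<close>

type_synonym weyl = "nat \<times> nat \<Rightarrow> complex"

definition wsupp :: "weyl \<Rightarrow> (nat \<times> nat) set" where
  "wsupp P = {ij. P ij \<noteq> 0}"

definition weyl_elem :: "weyl \<Rightarrow> bool" where
  "weyl_elem P \<longleftrightarrow> finite (wsupp P)"

text \<open>Product using [d,x]=1, i.e.
  (x^i d^j)(x^k d^l) = sum_t C(j,t) C(k,t) t! x^(i+k-t) d^(j+l-t).\<close>

definition weyl_mult :: "weyl \<Rightarrow> weyl \<Rightarrow> weyl" where
  "weyl_mult P Q = (\<lambda>(a, b).
     \<Sum>(ij, kl) \<in> wsupp P \<times> wsupp Q.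
       \<Sum>t \<in> {..min (snd ij) (fst kl)}.
         (if fst ij + fst kl - t = a \<and> snd ij + snd kl - t = b
          then P ij * Q kl * of_nat (snd ij choose t) * of_nat (fst kl choose t)
               * of_nat (fact t)
          else 0))"

definition ord :: "weyl \<Rightarrow> nat" where
  "ord P = Max (snd ` wsupp P)"

definition Lam :: "nat \<Rightarrow> nat \<times> nat \<Rightarrow> nat" where
  "Lam p ij = p * fst ij + 2 * snd ij"

definition delta :: "nat \<Rightarrow> weyl \<Rightarrow> nat" where
  "delta p P = Max (Lam p ` wsupp P)"

text \<open>The symbol, as coefficient function of a polynomial in C[chi,xi]:
  (i,j) |-> coefficient of chi^i xi^j.\<close>
definition symbol :: "nat \<Rightarrow> weyl \<Rightarrow> (nat \<times> nat \<Rightarrow> complex)" where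
  "symbol p P = (\<lambda>ij. if Lam p ij = delta p P then P ij else 0)"

text \<open>Coefficients of (xi^p + chi^2)^2 = xi^(2p) + 2 chi^2 xi^p + chi^4.\<close>
definition target_symbol :: "nat \<Rightarrow> (nat \<times> nat \<Rightarrow> complex)" where
  "target_symbol p = (\<lambda>ij. if ij = (0, 2 * p) then 1
                          else if ij = (2, p) then 2
                          else if ij = (4, 0) then 1 else 0)"

end

theory Submission
  imports Defs
begin

text \<open>At weight \<open>\<delta>(L) + \<delta>(M) - (p + 2)\<close> the commutator \<open>[L, M]\<close> is the Poisson bracket of
  the symbols, so \<open>g = \<sigma>(M)\<close> Poisson-commutes with \<open>f = (\<xi>\<^sup>p + \<chi>\<^sup>2)\<^sup>2\<close>. Comparing
  coefficients gives a three-term recurrence in the \<open>\<chi>\<close>-degree which kills every odd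
  \<open>\<chi>\<close>-degree, forces a pure power \<open>\<xi>\<^sup>l\<close> in \<open>g\<close> (otherwise \<open>g\<close> vanishes by descent), and
  forces the monomial of highest \<open>\<chi>\<close>-degree \<open>A\<close> to be \<open>\<chi>\<^sup>A\<close>. Then \<open>A = 2m\<close> is even,
  \<open>\<delta>(M) = pA = 2l\<close>, and \<open>ord M = l = pm\<close>.\<close>

lemma Lam_le_delta:
  assumes "weyl_elem P" and "ij \<in> wsupp P"
  shows "Lam p ij \<le> delta p P"
  using assms unfolding weyl_elem_def delta_def by simp

lemma weyl_mult_apply:
  "weyl_mult P Q (a, b) = (\<Sum>ij\<in>wsupp P. \<Sum>kl\<in>wsupp Q. \<Sum>t \<in> {..min (snd ij) (fst kl)}.
         (if fst ij + fst kl - t = a \<and> snd ij + snd kl - t = b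
          then P ij * Q kl * of_nat (snd ij choose t) * of_nat (fst kl choose t) * of_nat (fact t)
          else 0))"
  unfolding weyl_mult_def by (simp add: sum.cartesian_product)

text \<open>Each normal-ordering contraction lowers the weight by \<open>p + 2\<close>, so at weight
  \<open>dP + dQ - (p + 2)\<close> only the terms with \<open>t = 0\<close> and \<open>t = 1\<close> survive, and the
  latter only between monomials of top weight.\<close>

lemma weyl_mult_summand_near_top:
  fixes P Q :: weyl
  assumes "Lam p ij \<le> dP" and "Lam p kl \<le> dQ"
    and weight: "p * a + 2 * b + p + 2 = dP + dQ"
  shows "(\<Sum>t \<in> {..min (snd ij) (fst kl)}.
         (if fst ij + fst kl - t = a \<and> snd ij + snd kl - t = b
          then P ij * Q kl * of_nat (snd ij choose t) * of_nat (fst kl choose t) * of_nat (fact t)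
          else 0))
   = (if fst ij + fst kl = a \<and> snd ij + snd kl = b then P ij * Q kl else 0)
   + (if Lam p ij = dP \<and> Lam p kl = dQ \<and> fst ij + fst kl = a + 1 \<and> snd ij + snd kl = b + 1
      then of_nat (snd ij) * of_nat (fst kl) * P ij * Q kl else 0)"
proof -
  obtain i j k l where ij: "ij = (i, j)" and kl: "kl = (k, l)" by fastforce
  have bound_ij: "p * i + 2 * j \<le> dP" and bound_kl: "p * k + 2 * l \<le> dQ"
    using assms(1,2) ij kl by (auto simp: Lam_def)
  define f where "f t = (if i + k - t = a \<and> j + l - t = b
      then P (i, j) * Q (k, l) * of_nat (j choose t) * of_nat (k choose t) * of_nat (fact t)
      else (0::complex))" for t
  have f_vanish: "f t = 0" if "t \<le> min j k" "t \<ge> 2" for t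
  proof (rule ccontr)
    assume "f t \<noteq> 0"
    then have "i + k = a + t" "j + l = b + t"
      using that unfolding f_def by (auto split: if_splits)
    then have "p * i + p * k + 2 * j + 2 * l = p * a + 2 * b + p * t + 2 * t"
      by (metis add_mult_distrib2 add.assoc add.commute add.left_commute)
    moreover have "p * t \<ge> p * 2" using that(2) by simp
    ultimately show False using bound_ij bound_kl weight that(2) by linarith
  qed
  have f1: "f 1 = (if Lam p (i, j) = dP \<and> Lam p (k, l) = dQ \<and> i + k = a + 1 \<and> j + l = b + 1
      then of_nat j * of_nat k * P (i, j) * Q (k, l) else 0)" if "1 \<le> j" "1 \<le> k"
  proof -
    have "Lam p (i, j) = dP \<and> Lam p (k, l) = dQ" if "i + k = a + 1" "j + l = b + 1"
    proof -
      have "p * (i + k) + 2 * (j + l) = p * a + 2 * b + p + 2"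
        using that by (simp add: algebra_simps)
      then show ?thesis using bound_ij bound_kl weight by (simp add: Lam_def algebra_simps)
    qed
    moreover have "(i + k - 1 = a \<and> j + l - 1 = b) = (i + k = a + 1 \<and> j + l = b + 1)"
      using \<open>1 \<le> j\<close> \<open>1 \<le> k\<close> by auto
    ultimately show ?thesis unfolding f_def by (auto simp: algebra_simps)
  qed
  have "(\<Sum>t \<in> {..min j k}. f t) = f 0 + (if Lam p (i, j) = dP \<and> Lam p (k, l) = dQ
      \<and> i + k = a + 1 \<and> j + l = b + 1 then of_nat j * of_nat k * P (i, j) * Q (k, l) else 0)"
  proof (cases "min j k = 0")
    case False
    then have "(\<Sum>t \<in> {..min j k}. f t) = (\<Sum>t \<in> {0, 1}. f t)"
      using f_vanish by (intro sum.mono_neutral_right) auto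
    then show ?thesis using f1 False by simp
  qed auto
  then show ?thesis unfolding ij kl fst_conv snd_conv f_def by simp
qed

text \<open>The commutator at weight \<open>\<delta>(P) + \<delta>(Q) - (p + 2)\<close> is the Poisson bracket
  \<open>{\<sigma>(P), \<sigma>(Q)} = \<sigma>(P)\<^sub>\<xi> \<sigma>(Q)\<^sub>\<chi> - \<sigma>(P)\<^sub>\<chi> \<sigma>(Q)\<^sub>\<xi>\<close> of the symbols.\<close>

lemma weyl_commutator_coeff_eq_poisson:
  fixes P Q :: weyl
  assumes "weyl_elem P" and "weyl_elem Q"
    and weight: "p * a + 2 * b + p + 2 = delta p P + delta p Q"
  shows "weyl_mult P Q (a, b) - weyl_mult Q P (a, b) =
    (\<Sum>ij\<in>wsupp P. \<Sum>kl\<in>wsupp Q.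
       if fst ij + fst kl = a + 1 \<and> snd ij + snd kl = b + 1
       then (of_nat (snd ij) * of_nat (fst kl) - of_nat (snd kl) * of_nat (fst ij))
            * symbol p P ij * symbol p Q kl
       else 0)"
proof -
  note bound_P = Lam_le_delta[OF assms(1)] and bound_Q = Lam_le_delta[OF assms(2)]
  have weight': "p * a + 2 * b + p + 2 = delta p Q + delta p P" using weight by simp
  have PQ: "weyl_mult P Q (a, b) = (\<Sum>ij\<in>wsupp P. \<Sum>kl\<in>wsupp Q.
     (if fst ij + fst kl = a \<and> snd ij + snd kl = b then P ij * Q kl else 0)
   + (if Lam p ij = delta p P \<and> Lam p kl = delta p Q \<and> fst ij + fst kl = a + 1
        \<and> snd ij + snd kl = b + 1 then of_nat (snd ij) * of_nat (fst kl) * P ij * Q kl else 0))"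
    unfolding weyl_mult_apply
    by (intro sum.cong refl weyl_mult_summand_near_top[OF _ _ weight] bound_P bound_Q)
  have "weyl_mult Q P (a, b) = (\<Sum>kl\<in>wsupp Q. \<Sum>ij\<in>wsupp P.
     (if fst kl + fst ij = a \<and> snd kl + snd ij = b then Q kl * P ij else 0)
   + (if Lam p kl = delta p Q \<and> Lam p ij = delta p P \<and> fst kl + fst ij = a + 1
        \<and> snd kl + snd ij = b + 1 then of_nat (snd kl) * of_nat (fst ij) * Q kl * P ij else 0))"
    unfolding weyl_mult_apply
    by (intro sum.cong refl weyl_mult_summand_near_top[OF _ _ weight'] bound_P bound_Q)
  also have "\<dots> = (\<Sum>ij\<in>wsupp P. \<Sum>kl\<in>wsupp Q.
     (if fst ij + fst kl = a \<and> snd ij + snd kl = b then P ij * Q kl else 0)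
   + (if Lam p ij = delta p P \<and> Lam p kl = delta p Q \<and> fst ij + fst kl = a + 1
        \<and> snd ij + snd kl = b + 1 then of_nat (snd kl) * of_nat (fst ij) * P ij * Q kl else 0))"
    by (subst sum.swap) (intro sum.cong refl, auto simp: add.commute mult.commute mult.left_commute)
  finally have QP: "weyl_mult Q P (a, b) = \<dots>" .
  show ?thesis
    unfolding PQ QP sum_subtractf[symmetric]
    by (intro sum.cong refl) (auto simp: symbol_def algebra_simps)
qed

text \<open>The coefficient of \<open>\<chi>\<^sup>a \<xi>\<^sup>b\<close> in \<open>{(\<xi>\<^sup>p + \<chi>\<^sup>2)\<^sup>2, g}\<close> for \<open>g = \<Sum> g(k,l) \<chi>\<^sup>k \<xi>\<^sup>l\<close>;
  the guards drop the terms whose index would be negative.\<close>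

definition poisson_target_coeff :: "nat \<Rightarrow> (nat \<times> nat \<Rightarrow> complex) \<Rightarrow> nat \<Rightarrow> nat \<Rightarrow> complex" where
  "poisson_target_coeff p g a b =
     (if 2 * p \<le> b + 1 then 2 * of_nat p * of_nat (a + 1) * g (a + 1, b + 1 - 2 * p) else 0)
   + (if 1 \<le> a \<and> p \<le> b + 1
      then 2 * (of_nat p * of_nat (a - 1) - 2 * of_nat (b + 1 - p)) * g (a - 1, b + 1 - p) else 0)
   - (if 3 \<le> a then 4 * of_nat (b + 1) * g (a - 3, b + 1) else 0)"

lemma delta_eq_of_target_symbol:
  assumes "0 < p" and "symbol p L = target_symbol p"
  shows "delta p L = 4 * p"
proof -
  have "symbol p L (0, 2 * p) = 1" using assms(2) by (simp add: target_symbol_def)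
  then show ?thesis by (auto simp: symbol_def Lam_def split: if_splits)
qed

lemma commutator_coeff_eq_poisson_target:
  fixes L M :: weyl
  assumes "0 < p" and "weyl_elem L" and L: "symbol p L = target_symbol p" and "weyl_elem M"
    and weight: "p * a + 2 * b + p + 2 = 4 * p + delta p M"
  shows "weyl_mult L M (a, b) - weyl_mult M L (a, b) = poisson_target_coeff p (symbol p M) a b"
proof -
  define h where "h ij = (if fst ij \<le> a + 1 \<and> snd ij \<le> b + 1
      then (of_nat (snd ij) * of_nat (a + 1 - fst ij) - of_nat (b + 1 - snd ij) * of_nat (fst ij))
           * symbol p L ij * symbol p M (a + 1 - fst ij, b + 1 - snd ij)
      else 0)" for ij
  have fin_M: "finite (wsupp M)" using assms(4) by (simp add: weyl_elem_def)
  have inner: "(\<Sum>kl\<in>wsupp M. if fst ij + fst kl = a + 1 \<and> snd ij + snd kl = b + 1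
       then (of_nat (snd ij) * of_nat (fst kl) - of_nat (snd kl) * of_nat (fst ij))
            * symbol p L ij * symbol p M kl
       else 0) = h ij" for ij
  proof (cases "fst ij \<le> a + 1 \<and> snd ij \<le> b + 1")
    case True
    have "(fst ij + fst kl = a + 1 \<and> snd ij + snd kl = b + 1)
        = (kl = (a + 1 - fst ij, b + 1 - snd ij))" for kl
      using True by (cases kl) auto
    then show ?thesis
      using True fin_M by (simp add: h_def wsupp_def symbol_def)
  qed (auto simp: h_def intro!: sum.neutral)
  have "ij \<in> wsupp L" if "target_symbol p ij \<noteq> 0" for ij
    using that fun_cong[OF L, of ij] by (auto simp: symbol_def wsupp_def split: if_splits)
  then have support: "{(0, 2 * p), (2, p), (4, 0)} \<subseteq> wsupp L"
    using assms(1) by (auto simp: target_symbol_def)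
  have "weyl_mult L M (a, b) - weyl_mult M L (a, b) = (\<Sum>ij\<in>wsupp L. h ij)"
    unfolding weyl_commutator_coeff_eq_poisson[OF assms(2,4)
        weight[folded delta_eq_of_target_symbol[OF assms(1) L]]] inner ..
  also have "\<dots> = (\<Sum>ij\<in>{(0, 2 * p), (2, p), (4, 0)}. h ij)"
    using support assms(2) L
    by (intro sum.mono_neutral_right) (auto simp: weyl_elem_def h_def target_symbol_def)
  also have "\<dots> = h (0, 2 * p) + h (2, p) + h (4, 0)"
    using assms(1) by simp
  also have "\<dots> = poisson_target_coeff p (symbol p M) a b"
    using assms(1) L by (auto simp: h_def poisson_target_coeff_def target_symbol_def algebra_simps)
  finally show ?thesis .
qed

context
  fixes p D :: nat and g :: "nat \<times> nat \<Rightarrow> complex"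
  assumes p_pos: "0 < p"
    and homogeneous: "\<And>k l. g (k, l) \<noteq> 0 \<Longrightarrow> p * k + 2 * l = D"
    and poisson_zero: "\<And>a b. p * a + 2 * b + p + 2 = 4 * p + D \<Longrightarrow> poisson_target_coeff p g a b = 0"
begin

text \<open>At \<open>(a, b) = (k - 1, l + 2p - 1)\<close> the first term of the bracket is \<open>2pk g(k,l)\<close>.\<close>

lemma coeff_zero_of_lower_zero:
  assumes "0 < k"
    and "2 \<le> k \<Longrightarrow> \<forall>l. g (k - 2, l) = 0" and "4 \<le> k \<Longrightarrow> \<forall>l. g (k - 4, l) = 0"
  shows "g (k, l) = 0"
proof (rule ccontr)
  assume nz: "g (k, l) \<noteq> 0"
  define a where "a = k - 1"
  define b where "b = l + 2 * p - 1"
  have a: "a + 1 = k" and b: "b + 1 = l + 2 * p" using \<open>0 < k\<close> p_pos by (simp_all add: a_def b_def)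
  have "p * k + 2 * l = D" using homogeneous[OF nz] .
  moreover have "p * k = p * a + p" using a by auto
  ultimately have "p * a + 2 * b + p + 2 = 4 * p + D" using b by linarith
  then have "poisson_target_coeff p g a b = 0" by (rule poisson_zero)
  moreover have "poisson_target_coeff p g a b = 2 * of_nat p * of_nat k * g (k, l)"
  proof -
    have "g (a - 1, l + p) = 0" if "1 \<le> a"
    proof -
      have "2 \<le> k" "k - 2 = a - 1" using that a by auto
      then show ?thesis using assms(2) by auto
    qed
    moreover have "g (a - 3, l + 2 * p) = 0" if "3 \<le> a"
    proof -
      have "4 \<le> k" "k - 4 = a - 3" using that a by auto
      then show ?thesis using assms(3) by auto
    qed
    moreover have "l + 2 * p - p = l + p" by simp
    ultimately show ?thesis unfolding poisson_target_coeff_def b a by (simp add: add.commute)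
  qed
  ultimately have "2 * of_nat p * of_nat k * g (k, l) = 0" by simp
  then show False using nz p_pos \<open>0 < k\<close> by simp
qed

lemma odd_coeff_zero:
  assumes "odd k"
  shows "g (k, l) = 0"
  using assms
proof (induction k arbitrary: l rule: less_induct)
  case (less k)
  show ?case
    by (rule coeff_zero_of_lower_zero) (use less in \<open>auto intro!: less.IH odd_pos\<close>)
qed

lemma coeff_zero_of_pure_xi_zero:
  assumes "\<And>l. g (0, l) = 0"
  shows "g (k, l) = 0"
proof (induction k arbitrary: l rule: less_induct)
  case (less k)
  show ?case
  proof (cases "k = 0")
    case False
    then show ?thesis by (intro coeff_zero_of_lower_zero) (auto intro!: less.IH)
  qed (simp add: assms)
qed

text \<open>At \<open>(a, b) = (A + 3, l - 1)\<close> only the last term of the bracket can survive.\<close>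

lemma top_chi_coeff_pure:
  assumes nz: "g (A, l) \<noteq> 0" and above: "\<And>k l'. A < k \<Longrightarrow> g (k, l') = 0"
  shows "l = 0"
proof (rule ccontr)
  assume "l \<noteq> 0"
  define b where "b = l - 1"
  have b: "b + 1 = l" using \<open>l \<noteq> 0\<close> by (simp add: b_def)
  have "p * A + 2 * l = D" using homogeneous[OF nz] .
  moreover have "p * (A + 3) = p * A + 3 * p" by (simp add: algebra_simps)
  ultimately have "p * (A + 3) + 2 * b + p + 2 = 4 * p + D" using b by linarith
  then have "poisson_target_coeff p g (A + 3) b = 0" by (rule poisson_zero)
  moreover have "poisson_target_coeff p g (A + 3) b = - 4 * of_nat l * g (A, l)"
    using above[of "A + 3 + 1"] above[of "A + 3 - 1"] unfolding poisson_target_coeff_def b by simp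
  ultimately have "4 * of_nat l * g (A, l) = 0" by simp
  then show False using nz \<open>l \<noteq> 0\<close> by simp
qed

lemma weight_eq_2p_mult:
  assumes "g \<noteq> (\<lambda>_. 0)"
  shows "\<exists>m. D = 2 * p * m \<and> g (0, p * m) \<noteq> 0"
proof -
  obtain l0 where l0: "g (0, l0) \<noteq> 0"
    using assms coeff_zero_of_pure_xi_zero by fastforce
  define S where "S = {k. \<exists>l. g (k, l) \<noteq> 0}"
  have "S \<subseteq> {..D}"
  proof
    fix k assume "k \<in> S"
    then obtain l where "p * k + 2 * l = D" using homogeneous unfolding S_def by blast
    moreover have "k \<le> p * k" using p_pos by (cases p) auto
    ultimately have "k \<le> D" by linarith
    then show "k \<in> {..D}" by simp
  qed
  then have "finite S" by (rule finite_subset) simp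
  moreover have "0 \<in> S" using l0 by (auto simp: S_def)
  ultimately have "Max S \<in> S" by (intro Max_in) auto
  then obtain l where top: "g (Max S, l) \<noteq> 0" by (auto simp: S_def)
  have "g (k, l') = 0" if "Max S < k" for k l'
  proof (rule ccontr)
    assume "g (k, l') \<noteq> 0"
    then have "k \<in> S" by (auto simp: S_def)
    then show False using \<open>finite S\<close> that by (simp add: leD)
  qed
  then have "l = 0" using top by (rule top_chi_coeff_pure[rotated])
  obtain m where "Max S = 2 * m"
    using top odd_coeff_zero by (meson evenE)
  then have "D = 2 * p * m" using homogeneous[OF top] \<open>l = 0\<close> by simp
  moreover have "l0 = p * m" using homogeneous[OF l0] calculation by simp
  ultimately show ?thesis using l0 by blast
qed

end

lemma symbol_nonzero:
  assumes "weyl_elem M" and "M \<noteq> (\<lambda>_. 0)"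
  shows "symbol p M \<noteq> (\<lambda>_. 0)"
proof -
  have "wsupp M \<noteq> {}" using assms(2) by (auto simp: wsupp_def)
  then have "delta p M \<in> Lam p ` wsupp M"
    using assms(1) unfolding delta_def weyl_elem_def by (intro Max_in) auto
  then obtain ij where "ij \<in> wsupp M" and "Lam p ij = delta p M" by auto
  then have "symbol p M ij \<noteq> 0" by (simp add: symbol_def wsupp_def)
  then show ?thesis by auto
qed

lemma ord_eq_of_pure_xi_symbol:
  assumes "weyl_elem M" and "symbol p M (0, l) \<noteq> 0"
  shows "ord M = l"
  unfolding ord_def
proof (rule Max_eqI)
  have top: "Lam p (0, l) = delta p M" and "M (0, l) \<noteq> 0"
    using assms(2) by (auto simp: symbol_def split: if_splits)
  then show "l \<in> snd ` wsupp M" by (force simp: wsupp_def)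
  show "finite (snd ` wsupp M)" using assms(1) by (simp add: weyl_elem_def)
  fix y assume "y \<in> snd ` wsupp M"
  then obtain i where "(i, y) \<in> wsupp M" by auto
  then have "p * i + 2 * y \<le> 2 * l"
    using Lam_le_delta[OF assms(1)] top by (fastforce simp: Lam_def)
  then show "y \<le> l" by linarith
qed

lemma mult_mod_double:
  fixes p m :: nat
  shows "p * m mod (2 * p) = (if even m then 0 else p)"
proof (cases "even m")
  case True
  then obtain q where "m = 2 * q" by blast
  then show ?thesis by simp
next
  case False
  then obtain q where "m = 2 * q + 1" by (blast elim: oddE)
  then have "p * m = p + 2 * p * q" by (simp add: algebra_simps)
  then show ?thesis using False by (cases "p = 0") simp_all
qed

theorem mainTheorem6:
  fixes p :: nat and L M :: weyl
  assumes "p > 0"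
    and "weyl_elem L" and "L \<noteq> (\<lambda>_. 0)"
    and "symbol p L = target_symbol p"
    and "weyl_elem M" and "M \<noteq> (\<lambda>_. 0)"
    and "weyl_mult L M = weyl_mult M L"
  shows "ord M mod (2 * p) = 0 \<or> ord M mod (2 * p) = p"
proof -
  have "\<exists>m. delta p M = 2 * p * m \<and> symbol p M (0, p * m) \<noteq> 0"
  proof (rule weight_eq_2p_mult)
    show "0 < p" by fact
    show "p * k + 2 * l = delta p M" if "symbol p M (k, l) \<noteq> 0" for k l
      using that by (simp add: symbol_def Lam_def split: if_splits)
    show "poisson_target_coeff p (symbol p M) a b = 0"
      if "p * a + 2 * b + p + 2 = 4 * p + delta p M" for a b
      using commutator_coeff_eq_poisson_target[OF assms(1,2,4,5) that] assms(7) by simp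
    show "symbol p M \<noteq> (\<lambda>_. 0)" using symbol_nonzero[OF assms(5,6)] .
  qed
  then obtain m where "symbol p M (0, p * m) \<noteq> 0" by blast
  then have "ord M = p * m" by (rule ord_eq_of_pure_xi_symbol[OF assms(5)])
  then show ?thesis by (simp add: mult_mod_double)
qed

end
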